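(* Let $\mathcal{R}$ be a cyclic proof system induced by a trace interpretation $\iota\colon\mathcal{R}\to\mathcal{T}_\mathcal{A}$, let $(C,\lambda,\delta)$ with $C=(T,\beta)$ be a proof in the reset proof system $\mathrm{R}(\mathcal{R})$, and let $\eta$ be a connected cycle of $C$. Then there exists $t\in\eta$ such that the invariant of the path from $\beta(t)$ to $t$ is a prefix of the invariant of the path from $\beta(s)$ to $s$ for every $s\in\eta$.
   Context: Activation algebras and $\mathcal{T}_\mathcal{A}$: an activation algebra $\mathcal{A}=(A,\le,\vee,0,\alpha)$ is a finite join-semilattice with least element $0$ and distinguished $\alpha\neq0$; $\mathcal{T}_\mathcal{A}$ has finite sets as objects and relations $R\subseteq X\times A\times Y$ as morphisms $X\to Y$. Cyclic trees: a tree is a nonempty prefix-closed $T\subseteq\omega^*$ ($\le$ prefix order, $\mathrm{Chld}(t)=\{ti\in T\}$, leaves = nodes without children). A cyclic tree $(T,\beta)$: finite tree $T$ and partial map $\beta$ from leaves to inner nodes with $\beta(t)<t$; $t\in\mathrm{dom}(\beta)$ are buds, $\beta(t)$ companions. A connected cycle is a set $\eta\subseteq\mathrm{dom}(\beta)$ such that (i) there is $b(\eta)\in\eta$ with $\beta(b(\eta))\le\beta(t)$ for all $t\in\eta$ and (ii) for every $t_0\in\eta$ there are $t_1,\dots,t_n\in\eta$ ($n\ge0$) with $\beta(t_i)\le t_{i+1}$ ($i<n$) and $t_n=b(\eta)$. Derivation systems and preproofs: a derivation system consists of a set $\textsc{Seq}$ of sequents, a set of rules and an interpretation assigning each rule $R$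 a tuple $(\Gamma,\Delta_1,\dots,\Delta_n)$ (conclusion, premises). A preproof is $(C,\lambda,\delta)$ with $C=(T,\beta)$ a cyclic tree, $\lambda\colon T\to\textsc{Seq}$ with $\lambda(t)=\lambda(\beta(t))$ for buds, and a partial $\delta$ from non-bud nodes to rules such that each non-bud $t$ either is a leaf not in $\mathrm{dom}(\delta)$ (open) or $\delta(t)$ has conclusion $\lambda(t)$ and premises $\lambda(t1),\dots,\lambda(tn)$ with $\mathrm{Chld}(t)=\{t1,\dots,tn\}$. A trace interpretation $\iota\colon\mathcal{R}\to\mathcal{T}_\mathcal{A}$ assigns each sequent $\Gamma$ an object $\iota(\Gamma)$ and each rule $R$ with conclusion $\Gamma$ and premises $\Delta_i$ morphisms $r_i\colon\iota(\Gamma)\to\iota(\Delta_i)$; the induced proof system has as proofs those preproofs without open leaves along whose every infinite branch the sequence of morphisms (identity at bud-to-companion steps) satisfies the trace condition of $\mathcal{T}_\mathcal{A}$. Safra boards: with a fixed countable chip set $\mathcal{C}\supseteq\omega$, a Safra board on a finite set $X$ is $(\Theta,\sigma)$ with $\Theta\subseteq\mathcal{C}$ finite and linearly ordered (the control) and $\sigma\colon X\times A\to\mathcal{P}(\mathcal{P}(\Theta))$, every chip lying in some stack $S\in\sigma(x,a)$; $\gamma$ is covered if it is the maximum of no stack. Weakening, population, $\gamma$-reset (for covered $\gamma$: replace every stack $S\ni\gamma$ by $\{z\in S\mid z\le\gamma\}$, keep the others, and drop chips no longer occurring) and $r$-successor transitions are as standard for Safra boards (defined as in the other statements of this collection). Reset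 proof system $\mathrm{R}(\mathcal{R})$: sequents are $\Gamma;(\Theta,\sigma)$ with $\Gamma$ an $\mathcal{R}$-sequent and $(\Theta,\sigma)$ a Safra board on $\iota(\Gamma)$ ($\Theta$ is its control). Rules: structural rules Weak, $\textsc{Reset}_\gamma$, Pop, each with conclusion $\Gamma;(\Theta,\sigma)$ and single premise $\Gamma;(\Theta',\sigma')$ where $(\Theta',\sigma')$ arises from $(\Theta,\sigma)$ by a weakening, a $\gamma$-reset, or a population respectively; and for every $\mathcal{R}$-rule $R$ (conclusion $\Gamma$, premises $\Delta_i$, maps $r_i$) and board $(\Theta,\sigma)$ on $\iota(\Gamma)$ a rule with conclusion $\Gamma;(\Theta,\sigma)$ and premises $\Delta_i;(\Theta_i,\sigma_i)$ where $(\Theta_i,\sigma_i)$ is an $r_i$-successor of $(\Theta,\sigma)$. For a bud $t$ of an $\mathrm{R}(\mathcal{R})$-preproof, consider the controls of the sequents on the path from $\beta(t)$ to $t$ and let $\Theta$ be their longest common prefix (as ordered sequences). An invariant of this path is a nonempty prefix $\theta$ of $\Theta$ such that a $\textsc{Reset}_{\max(\theta)}$ rule is applied on the path between $\beta(t)$ and $t$; "the invariant" means the longest such. An $\mathrm{R}(\mathcal{R})$-preproof without open leaves is a proof iff for every bud $t$ the path from $\beta(t)$ to $t$ has an invariant. *)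

theory Defs
  imports Main "HOL-Library.Sublist"
begin

definition children :: "nat list set \<Rightarrow> nat list \<Rightarrow> nat list set" where
  "children T t = {t @ [i] | i. t @ [i] \<in> T}"

definition is_leaf :: "nat list set \<Rightarrow> nat list \<Rightarrow> bool" where
  "is_leaf T t \<longleftrightarrow> t \<in> T \<and> children T t = {}"

definition is_inner :: "nat list set \<Rightarrow> nat list \<Rightarrow> bool" where
  "is_inner T t \<longleftrightarrow> t \<in> T \<and> children T t \<noteq> {}"

definition is_tree :: "nat list set \<Rightarrow> bool" where
  "is_tree T \<longleftrightarrow> T \<noteq> {} \<and> (\<forall>t\<in>T. \<forall>s. prefix s t \<longrightarrow> s \<in> T)"

definition cyclic_tree :: "nat list set \<Rightarrow> (nat list \<rightharpoonup> nat list) \<Rightarrow> bool" where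
  "cyclic_tree T \<beta> \<longleftrightarrow> is_tree T \<and> finite T \<and>
     (\<forall>t\<in>dom \<beta>. is_leaf T t \<and> is_inner T (the (\<beta> t)) \<and> strict_prefix (the (\<beta> t)) t)"

definition connected_cycle :: "(nat list \<rightharpoonup> nat list) \<Rightarrow> nat list set \<Rightarrow> bool" where
  "connected_cycle \<beta> \<eta> \<longleftrightarrow> \<eta> \<subseteq> dom \<beta> \<and>
     (\<exists>b\<in>\<eta>. (\<forall>t\<in>\<eta>. prefix (the (\<beta> b)) (the (\<beta> t))) \<and>
       (\<forall>t0\<in>\<eta>. \<exists>ts. ts \<noteq> [] \<and> hd ts = t0 \<and> last ts = b \<and> set ts \<subseteq> \<eta> \<and>
          (\<forall>i. Suc i < length ts \<longrightarrow> prefix (the (\<beta> (ts ! i))) (ts ! Suc i))))"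

text \<open>A control is a finite linearly ordered set of chips,
  represented as a list of distinct chips (list order = chip order).
  The activation algebra is a finite type of class bounded_semilattice_sup_bot
  (bot = 0, sup = join) with a distinguished element alpha different from bot.\<close>

type_synonym ('x, 'a) board = "nat list \<times> ('x \<Rightarrow> 'a \<Rightarrow> nat set set)"

definition chip_le :: "nat list \<Rightarrow> nat \<Rightarrow> nat \<Rightarrow> bool" where
  "chip_le \<Theta> z g \<longleftrightarrow> (\<exists>i j. i \<le> j \<and> j < length \<Theta> \<and> \<Theta> ! i = z \<and> \<Theta> ! j = g)"

definition occurring :: "('x \<Rightarrow> 'a \<Rightarrow> nat set set) \<Rightarrow> nat set" where
  "occurring \<sigma> = {g. \<exists>x a S. S \<in> \<sigma> x a \<and> g \<in> S}"

definition trim :: "nat list \<Rightarrow> ('x \<Rightarrow> 'a \<Rightarrow> nat set set) \<Rightarrow> nat list" where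
  "trim \<Theta> \<sigma> = filter (\<lambda>g. g \<in> occurring \<sigma>) \<Theta>"

definition safra_board :: "'x set \<Rightarrow> ('x, 'a) board \<Rightarrow> bool" where
  "safra_board X B \<longleftrightarrow> (case B of (\<Theta>, \<sigma>) \<Rightarrow>
     distinct \<Theta> \<and> (\<forall>x a. x \<notin> X \<longrightarrow> \<sigma> x a = {}) \<and>
     (\<forall>x a S. S \<in> \<sigma> x a \<longrightarrow> S \<subseteq> set \<Theta>) \<and> set \<Theta> \<subseteq> occurring \<sigma>)"

definition is_stack_max :: "nat list \<Rightarrow> nat set \<Rightarrow> nat \<Rightarrow> bool" where
  "is_stack_max \<Theta> S g \<longleftrightarrow> g \<in> S \<and> (\<forall>z\<in>S. chip_le \<Theta> z g)"

definition covered :: "('x, 'a) board \<Rightarrow> nat \<Rightarrow> bool" where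
  "covered B g \<longleftrightarrow> (case B of (\<Theta>, \<sigma>) \<Rightarrow>
     g \<in> set \<Theta> \<and> \<not> (\<exists>x a S. S \<in> \<sigma> x a \<and> is_stack_max \<Theta> S g))"

definition weakening :: "('x, 'a) board \<Rightarrow> ('x, 'a) board \<Rightarrow> bool" where
  "weakening B B' \<longleftrightarrow> (case B of (\<Theta>, \<sigma>) \<Rightarrow> case B' of (\<Theta>', \<sigma>') \<Rightarrow>
     (\<forall>x a. \<sigma>' x a \<subseteq> \<sigma> x a) \<and> \<Theta>' = trim \<Theta> \<sigma>')"

definition reset :: "nat \<Rightarrow> ('x, 'a) board \<Rightarrow> ('x, 'a) board \<Rightarrow> bool" where
  "reset g B B' \<longleftrightarrow> (case B of (\<Theta>, \<sigma>) \<Rightarrow> case B' of (\<Theta>', \<sigma>') \<Rightarrow>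
     covered B g \<and>
     \<sigma>' = (\<lambda>x a. (\<lambda>S. if g \<in> S then {z \<in> S. chip_le \<Theta> z g} else S) ` \<sigma> x a) \<and>
     \<Theta>' = trim \<Theta> \<sigma>')"

definition population :: "'a::bounded_semilattice_sup_bot \<Rightarrow> 'x set \<Rightarrow> ('x, 'a) board \<Rightarrow> ('x, 'a) board \<Rightarrow> bool" where
  "population \<alpha> X B B' \<longleftrightarrow> (case B of (\<Theta>, \<sigma>) \<Rightarrow> case B' of (\<Theta>', \<sigma>') \<Rightarrow>
     (\<exists>g. g \<notin> set \<Theta> \<and> \<Theta>' = \<Theta> @ [g] \<and>
       \<sigma>' = (\<lambda>x a. if x \<in> X then
               \<sigma> x a \<union> (if a = bot then {S \<union> {g} | S b. S \<in> \<sigma> x b \<and> \<alpha> \<le> b} \<union> {{g}} else {})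
             else {})))"

definition successor :: "('x \<times> 'a::bounded_semilattice_sup_bot \<times> 'x) set \<Rightarrow> ('x, 'a) board \<Rightarrow> ('x, 'a) board \<Rightarrow> bool" where
  "successor r B B' \<longleftrightarrow> (case B of (\<Theta>, \<sigma>) \<Rightarrow> case B' of (\<Theta>', \<sigma>') \<Rightarrow>
     \<sigma>' = (\<lambda>y b. {S. \<exists>x a c. (x, c, y) \<in> r \<and> S \<in> \<sigma> x a \<and> b = sup a c}) \<and>
     \<Theta>' = trim \<Theta> \<sigma>')"

text \<open>A derivation system is given by types of sequents 's and rules 'r and an
  interpretation (concl, prems).\<close>

definition trace_interpretation ::
  "('r \<Rightarrow> 's) \<Rightarrow> ('r \<Rightarrow> 's list) \<Rightarrow> ('s \<Rightarrow> 'x set) \<Rightarrow> ('r \<Rightarrow> nat \<Rightarrow> ('x \<times> 'a \<times> 'x) set) \<Rightarrow> bool" where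
  "trace_interpretation concl prems obj mor \<longleftrightarrow>
     (\<forall>\<Gamma>. finite (obj \<Gamma>)) \<and>
     (\<forall>R i. i < length (prems R) \<longrightarrow> mor R i \<subseteq> obj (concl R) \<times> UNIV \<times> obj (prems R ! i))"

datatype ('s, 'x, 'a, 'r) rrule =
    RWeak 's "('x, 'a) board" "('x, 'a) board"
  | RReset nat 's "('x, 'a) board" "('x, 'a) board"
  | RPop 's "('x, 'a) board" "('x, 'a) board"
  | RLift 'r "('x, 'a) board" "('x, 'a) board list"

type_synonym ('s, 'x, 'a) rseq = "'s \<times> ('x, 'a) board"

definition rr_sequent :: "('s \<Rightarrow> 'x set) \<Rightarrow> ('s, 'x, 'a) rseq \<Rightarrow> bool" where
  "rr_sequent obj G \<longleftrightarrow> safra_board (obj (fst G)) (snd G)"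

fun rr_concl :: "('r \<Rightarrow> 's) \<Rightarrow> ('s, 'x, 'a, 'r) rrule \<Rightarrow> ('s, 'x, 'a) rseq" where
  "rr_concl concl (RWeak \<Gamma> B B') = (\<Gamma>, B)"
| "rr_concl concl (RReset g \<Gamma> B B') = (\<Gamma>, B)"
| "rr_concl concl (RPop \<Gamma> B B') = (\<Gamma>, B)"
| "rr_concl concl (RLift R B Bs) = (concl R, B)"

fun rr_prems :: "('r \<Rightarrow> 's list) \<Rightarrow> ('s, 'x, 'a, 'r) rrule \<Rightarrow> ('s, 'x, 'a) rseq list" where
  "rr_prems prems (RWeak \<Gamma> B B') = [(\<Gamma>, B')]"
| "rr_prems prems (RReset g \<Gamma> B B') = [(\<Gamma>, B')]"
| "rr_prems prems (RPop \<Gamma> B B') = [(\<Gamma>, B')]"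
| "rr_prems prems (RLift R B Bs) = zip (prems R) Bs"

fun rr_rule :: "'a::bounded_semilattice_sup_bot \<Rightarrow> ('r \<Rightarrow> 's) \<Rightarrow> ('r \<Rightarrow> 's list) \<Rightarrow> ('s \<Rightarrow> 'x set) \<Rightarrow>
    ('r \<Rightarrow> nat \<Rightarrow> ('x \<times> 'a \<times> 'x) set) \<Rightarrow> ('s, 'x, 'a, 'r) rrule \<Rightarrow> bool" where
  "rr_rule \<alpha> concl prems obj mor (RWeak \<Gamma> B B') \<longleftrightarrow>
     safra_board (obj \<Gamma>) B \<and> safra_board (obj \<Gamma>) B' \<and> weakening B B'"
| "rr_rule \<alpha> concl prems obj mor (RReset g \<Gamma> B B') \<longleftrightarrow>
     safra_board (obj \<Gamma>) B \<and> safra_board (obj \<Gamma>) B' \<and> reset g B B'"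
| "rr_rule \<alpha> concl prems obj mor (RPop \<Gamma> B B') \<longleftrightarrow>
     safra_board (obj \<Gamma>) B \<and> safra_board (obj \<Gamma>) B' \<and> population \<alpha> (obj \<Gamma>) B B'"
| "rr_rule \<alpha> concl prems obj mor (RLift R B Bs) \<longleftrightarrow>
     safra_board (obj (concl R)) B \<and> length Bs = length (prems R) \<and>
     (\<forall>i < length Bs. safra_board (obj (prems R ! i)) (Bs ! i) \<and> successor (mor R i) B (Bs ! i))"

definition rr_preproof :: "'a::bounded_semilattice_sup_bot \<Rightarrow> ('r \<Rightarrow> 's) \<Rightarrow> ('r \<Rightarrow> 's list) \<Rightarrow> ('s \<Rightarrow> 'x set) \<Rightarrow>
    ('r \<Rightarrow> nat \<Rightarrow> ('x \<times> 'a \<times> 'x) set) \<Rightarrow> nat list set \<Rightarrow> (nat list \<rightharpoonup> nat list) \<Rightarrow>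
    (nat list \<Rightarrow> ('s, 'x, 'a) rseq) \<Rightarrow> (nat list \<rightharpoonup> ('s, 'x, 'a, 'r) rrule) \<Rightarrow> bool" where
  "rr_preproof \<alpha> concl prems obj mor T \<beta> lab \<delta> \<longleftrightarrow>
     cyclic_tree T \<beta> \<and>
     (\<forall>t\<in>T. rr_sequent obj (lab t)) \<and>
     (\<forall>t\<in>dom \<beta>. lab t = lab (the (\<beta> t))) \<and>
     dom \<delta> \<subseteq> T - dom \<beta> \<and>
     (\<forall>t\<in>T - dom \<beta>. (is_leaf T t \<and> \<delta> t = None) \<or>
        (\<exists>\<rho>. \<delta> t = Some \<rho> \<and> rr_rule \<alpha> concl prems obj mor \<rho> \<and> rr_concl concl \<rho> = lab t \<and>
             children T t = {t @ [i] | i. i < length (rr_prems prems \<rho>)} \<and>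
             (\<forall>i < length (rr_prems prems \<rho>). lab (t @ [i]) = rr_prems prems \<rho> ! i)))"

definition control :: "(nat list \<Rightarrow> ('s, 'x, 'a) rseq) \<Rightarrow> nat list \<Rightarrow> nat list" where
  "control lab u = fst (snd (lab u))"

definition path_nodes :: "(nat list \<rightharpoonup> nat list) \<Rightarrow> nat list \<Rightarrow> nat list set" where
  "path_nodes \<beta> t = {u. prefix (the (\<beta> t)) u \<and> prefix u t}"

definition path_lcp :: "(nat list \<rightharpoonup> nat list) \<Rightarrow> (nat list \<Rightarrow> ('s, 'x, 'a) rseq) \<Rightarrow> nat list \<Rightarrow> nat list" where
  "path_lcp \<beta> lab t = arg_max length (\<lambda>p. \<forall>u\<in>path_nodes \<beta> t. prefix p (control lab u))"

definition is_invariant :: "(nat list \<rightharpoonup> nat list) \<Rightarrow> (nat list \<Rightarrow> ('s, 'x, 'a) rseq) \<Rightarrow>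
    (nat list \<rightharpoonup> ('s, 'x, 'a, 'r) rrule) \<Rightarrow> nat list \<Rightarrow> nat list \<Rightarrow> bool" where
  "is_invariant \<beta> lab \<delta> t \<theta> \<longleftrightarrow> \<theta> \<noteq> [] \<and> prefix \<theta> (path_lcp \<beta> lab t) \<and>
     (\<exists>u\<in>path_nodes \<beta> t. \<exists>\<Gamma> B B'. \<delta> u = Some (RReset (last \<theta>) \<Gamma> B B'))"

definition the_invariant :: "(nat list \<rightharpoonup> nat list) \<Rightarrow> (nat list \<Rightarrow> ('s, 'x, 'a) rseq) \<Rightarrow>
    (nat list \<rightharpoonup> ('s, 'x, 'a, 'r) rrule) \<Rightarrow> nat list \<Rightarrow> nat list" where
  "the_invariant \<beta> lab \<delta> t = arg_max length (is_invariant \<beta> lab \<delta> t)"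

definition rr_proof :: "'a::bounded_semilattice_sup_bot \<Rightarrow> ('r \<Rightarrow> 's) \<Rightarrow> ('r \<Rightarrow> 's list) \<Rightarrow> ('s \<Rightarrow> 'x set) \<Rightarrow>
    ('r \<Rightarrow> nat \<Rightarrow> ('x \<times> 'a \<times> 'x) set) \<Rightarrow> nat list set \<Rightarrow> (nat list \<rightharpoonup> nat list) \<Rightarrow>
    (nat list \<Rightarrow> ('s, 'x, 'a) rseq) \<Rightarrow> (nat list \<rightharpoonup> ('s, 'x, 'a, 'r) rrule) \<Rightarrow> bool" where
  "rr_proof \<alpha> concl prems obj mor T \<beta> lab \<delta> \<longleftrightarrow>
     rr_preproof \<alpha> concl prems obj mor T \<beta> lab \<delta> \<and>
     (\<forall>t\<in>T - dom \<beta>. \<delta> t \<noteq> None) \<and>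
     (\<forall>t\<in>dom \<beta>. \<exists>\<theta>. is_invariant \<beta> lab \<delta> t \<theta>)"

end

theory Submission
  imports Defs
begin

text \<open>Every invariant is a prefix of the control of each node on its path, so the invariants
  of two buds whose paths share a node are comparable in the prefix order. Connectedness of
  the cycle links any two of its buds by a chain of such overlapping paths. Along such a chain
  a shortest invariant stays a prefix: if it is a prefix of the invariant at one bud and the
  next invariant is shorter, both are prefixes of the former and hence comparable.\<close>

definition paths_meet :: "(nat list \<rightharpoonup> nat list) \<Rightarrow> nat list \<Rightarrow> nat list \<Rightarrow> bool" where
  "paths_meet \<beta> s t \<longleftrightarrow> path_nodes \<beta> s \<inter> path_nodes \<beta> t \<noteq> {}"

lemma prefix_of_shortest_rtranclp:
  assumes "R\<^sup>*\<^sup>* m x"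
    and comparable: "\<And>y z. R y z \<Longrightarrow> prefix (f y) (f z) \<or> prefix (f z) (f y)"
    and shortest: "\<And>y z. R y z \<Longrightarrow> length (f m) \<le> length (f z)"
  shows "prefix (f m) (f x)"
  using assms(1)
proof (induction rule: rtranclp_induct)
  case base
  show ?case by simp
next
  case (step y z)
  from comparable[OF step(2)] show ?case
  proof
    assume "prefix (f y) (f z)"
    with step(3) show ?thesis by (rule prefix_order.trans)
  next
    assume "prefix (f z) (f y)"
    with step(3) shortest[OF step(2)] show ?thesis using prefix_length_prefix by blast
  qed
qed

lemma path_lcp_prefix_control:
  assumes "prefix (the (\<beta> t)) t" and "u \<in> path_nodes \<beta> t"
  shows "prefix (path_lcp \<beta> lab t) (control lab u)"
proof -
  let ?P = "\<lambda>p. \<forall>u\<in>path_nodes \<beta> t. prefix p (control lab u)"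
  have "t \<in> path_nodes \<beta> t" using assms(1) by (simp add: path_nodes_def)
  then have "length p < Suc (length (control lab t))" if "?P p" for p
    using that prefix_length_le by (fastforce simp: less_Suc_eq_le)
  then have "?P (arg_max length ?P)"
    by (intro arg_max_natI[of ?P "[]"]) auto
  then show ?thesis using assms(2) unfolding path_lcp_def by blast
qed

lemma the_invariant_prefix_control:
  assumes "prefix (the (\<beta> t)) t" and "u \<in> path_nodes \<beta> t"
    and "is_invariant \<beta> lab \<delta> t \<theta>"
  shows "prefix (the_invariant \<beta> lab \<delta> t) (control lab u)"
proof -
  have "length \<theta>' < Suc (length (path_lcp \<beta> lab t))" if "is_invariant \<beta> lab \<delta> t \<theta>'" for \<theta>'
    using that prefix_length_le by (fastforce simp: is_invariant_def less_Suc_eq_le)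
  then have "is_invariant \<beta> lab \<delta> t (the_invariant \<beta> lab \<delta> t)"
    unfolding the_invariant_def using assms(3) by (intro arg_max_natI) auto
  then have "prefix (the_invariant \<beta> lab \<delta> t) (path_lcp \<beta> lab t)"
    by (simp add: is_invariant_def)
  also have "prefix \<dots> (control lab u)"
    using assms(1,2) by (rule path_lcp_prefix_control)
  finally show ?thesis .
qed

lemma the_invariants_comparable:
  assumes "paths_meet \<beta> s t"
    and "prefix (the (\<beta> s)) s" and "is_invariant \<beta> lab \<delta> s \<theta>"
    and "prefix (the (\<beta> t)) t" and "is_invariant \<beta> lab \<delta> t \<theta>'"
  shows "prefix (the_invariant \<beta> lab \<delta> s) (the_invariant \<beta> lab \<delta> t) \<or>
         prefix (the_invariant \<beta> lab \<delta> t) (the_invariant \<beta> lab \<delta> s)"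
proof -
  obtain u where "u \<in> path_nodes \<beta> s" "u \<in> path_nodes \<beta> t"
    using assms(1) unfolding paths_meet_def by blast
  then have "prefix (the_invariant \<beta> lab \<delta> s) (control lab u)"
    and "prefix (the_invariant \<beta> lab \<delta> t) (control lab u)"
    using assms(2-5) the_invariant_prefix_control by metis+
  then show ?thesis by (rule prefix_same_cases)
qed

definition bud_chain :: "(nat list \<rightharpoonup> nat list) \<Rightarrow> nat list list \<Rightarrow> bool" where
  "bud_chain \<beta> ts \<longleftrightarrow> (\<forall>i. Suc i < length ts \<longrightarrow> prefix (the (\<beta> (ts ! i))) (ts ! Suc i))"

lemma bud_chain_Cons_Cons:
  "bud_chain \<beta> (x # y # ys) \<longleftrightarrow> prefix (the (\<beta> x)) y \<and> bud_chain \<beta> (y # ys)"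
  unfolding bud_chain_def by (auto simp: less_Suc_eq_0_disj)

lemma bud_chain_covers_path:
  assumes "bud_chain \<beta> ts" and "ts \<noteq> []"
    and "\<forall>x\<in>set ts. prefix (the (\<beta> x)) x \<and> prefix (the (\<beta> (last ts))) (the (\<beta> x))"
    and "prefix (the (\<beta> (last ts))) u" and "prefix u (hd ts)"
  shows "\<exists>s\<in>set ts. u \<in> path_nodes \<beta> s"
  using assms
proof (induction ts rule: induct_list012)
  case (2 x)
  then show ?case by (simp add: path_nodes_def)
next
  case (3 x y ys)
  have "prefix (the (\<beta> x)) x" using "3.prems"(3) by simp
  with \<open>prefix u (hd (x # y # ys))\<close> consider "prefix u (the (\<beta> x))" | "prefix (the (\<beta> x)) u"
    using prefix_same_cases by fastforce
  then show ?case
  proof cases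
    case 1
    with "3.prems"(1) have "prefix u y" by (auto simp: bud_chain_Cons_Cons)
    then show ?thesis using "3.IH"(2) "3.prems" by (auto simp: bud_chain_Cons_Cons)
  next
    case 2
    then show ?thesis using "3.prems"(5) by (auto simp: path_nodes_def)
  qed
qed simp

lemma bud_chain_paths_meet:
  assumes "bud_chain \<beta> ts" and "ts \<noteq> []" and "set ts \<subseteq> \<eta>"
    and "\<forall>x\<in>set ts. prefix (the (\<beta> x)) x \<and> prefix (the (\<beta> (last ts))) (the (\<beta> x))"
  shows "\<forall>s\<in>set ts. (\<lambda>s t. s \<in> \<eta> \<and> t \<in> \<eta> \<and> paths_meet \<beta> s t)\<^sup>*\<^sup>* s (last ts)"
  using assms
proof (induction ts rule: induct_list012)
  case (3 x y ys)
  let ?R = "\<lambda>s t. s \<in> \<eta> \<and> t \<in> \<eta> \<and> paths_meet \<beta> s t"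
  have IH: "\<forall>s\<in>set (y # ys). ?R\<^sup>*\<^sup>* s (last (y # ys))"
    using "3.IH"(2) "3.prems" by (auto simp: bud_chain_Cons_Cons)
  have "\<exists>s\<in>set (y # ys). the (\<beta> x) \<in> path_nodes \<beta> s"
    using "3.prems" by (intro bud_chain_covers_path) (auto simp: bud_chain_Cons_Cons)
  then obtain s where s: "s \<in> set (y # ys)" "the (\<beta> x) \<in> path_nodes \<beta> s" by blast
  have "the (\<beta> x) \<in> path_nodes \<beta> x"
    using "3.prems"(4) by (simp add: path_nodes_def)
  with s "3.prems"(3) have "?R x s" by (auto simp: paths_meet_def)
  moreover have "?R\<^sup>*\<^sup>* s (last (y # ys))" using IH s(1) by blast
  ultimately have "?R\<^sup>*\<^sup>* x (last (y # ys))" by (rule converse_rtranclp_into_rtranclp)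
  with IH show ?case by simp
qed auto

lemma connected_cycle_paths_meet:
  assumes "connected_cycle \<beta> \<eta>" and "\<forall>x\<in>\<eta>. prefix (the (\<beta> x)) x"
    and "s \<in> \<eta>" and "t \<in> \<eta>"
  shows "(\<lambda>s t. s \<in> \<eta> \<and> t \<in> \<eta> \<and> paths_meet \<beta> s t)\<^sup>*\<^sup>* s t"
proof -
  let ?R = "\<lambda>s t. s \<in> \<eta> \<and> t \<in> \<eta> \<and> paths_meet \<beta> s t"
  obtain b where b: "b \<in> \<eta>" "\<forall>x\<in>\<eta>. prefix (the (\<beta> b)) (the (\<beta> x))"
    and chains: "\<forall>t0\<in>\<eta>. \<exists>ts. ts \<noteq> [] \<and> hd ts = t0 \<and> last ts = b \<and> set ts \<subseteq> \<eta> \<and> bud_chain \<beta> ts"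
    using assms(1) unfolding connected_cycle_def by (elim conjE bexE) (rule that, simp_all add: bud_chain_def)
  have to_b: "?R\<^sup>*\<^sup>* x b" if "x \<in> \<eta>" for x
  proof -
    obtain ts where ts: "ts \<noteq> []" "hd ts = x" "last ts = b" "set ts \<subseteq> \<eta>" "bud_chain \<beta> ts"
      using chains \<open>x \<in> \<eta>\<close> by blast
    have buds: "\<forall>y\<in>set ts. prefix (the (\<beta> y)) y \<and> prefix (the (\<beta> (last ts))) (the (\<beta> y))"
      using assms(2) b(2) ts(3,4) by blast
    have "\<forall>s\<in>set ts. ?R\<^sup>*\<^sup>* s (last ts)"
      using ts(5,1,4) buds by (rule bud_chain_paths_meet)
    with ts(1-3) show ?thesis using hd_in_set by fastforce
  qed
  have "symp ?R" unfolding symp_def paths_meet_def by blast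
  then have "?R\<^sup>*\<^sup>* b t" using to_b[OF assms(4)] by (rule sympD[OF symp_rtranclp])
  with to_b[OF assms(3)] show ?thesis by (rule rtranclp_trans)
qed

lemma rr_proof_bud_prefix:
  assumes "rr_proof \<alpha> concl prems obj mor T \<beta> lab \<delta>" and "t \<in> dom \<beta>"
  shows "prefix (the (\<beta> t)) t"
proof -
  have "cyclic_tree T \<beta>" using assms(1) by (simp add: rr_proof_def rr_preproof_def)
  with assms(2) have "strict_prefix (the (\<beta> t)) t" unfolding cyclic_tree_def by blast
  then show ?thesis by (rule prefix_order.less_imp_le)
qed

theorem mainTheorem8:
  fixes \<alpha> :: "'a::{finite, bounded_semilattice_sup_bot}"
    and concl :: "'r \<Rightarrow> 's" and prems :: "'r \<Rightarrow> 's list"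
    and obj :: "'s \<Rightarrow> 'x set" and mor :: "'r \<Rightarrow> nat \<Rightarrow> ('x \<times> 'a \<times> 'x) set"
    and T :: "nat list set" and \<beta> :: "nat list \<rightharpoonup> nat list"
    and lab :: "nat list \<Rightarrow> ('s, 'x, 'a) rseq" and \<delta> :: "nat list \<rightharpoonup> ('s, 'x, 'a, 'r) rrule"
    and \<eta> :: "nat list set"
  assumes "\<alpha> \<noteq> bot"
    and "trace_interpretation concl prems obj mor"
    and "rr_proof \<alpha> concl prems obj mor T \<beta> lab \<delta>"
    and "connected_cycle \<beta> \<eta>"
  shows "\<exists>t\<in>\<eta>. \<forall>s\<in>\<eta>. prefix (the_invariant \<beta> lab \<delta> t) (the_invariant \<beta> lab \<delta> s)"
proof -
  let ?\<theta> = "the_invariant \<beta> lab \<delta>"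
  let ?R = "\<lambda>s t. s \<in> \<eta> \<and> t \<in> \<eta> \<and> paths_meet \<beta> s t"
  have "\<eta> \<subseteq> dom \<beta>" using assms(4) by (simp add: connected_cycle_def)
  then have buds: "\<forall>x\<in>\<eta>. prefix (the (\<beta> x)) x"
    and invariant: "\<forall>x\<in>\<eta>. \<exists>\<theta>. is_invariant \<beta> lab \<delta> x \<theta>"
    using assms(3) rr_proof_bud_prefix unfolding rr_proof_def by blast+
  obtain b where "b \<in> \<eta>" using assms(4) unfolding connected_cycle_def by blast
  then obtain m where "m \<in> \<eta>" and shortest: "\<forall>s\<in>\<eta>. length (?\<theta> m) \<le> length (?\<theta> s)"
    using ex_has_least_nat[of "\<lambda>x. x \<in> \<eta>" b "\<lambda>x. length (?\<theta> x)"] by blast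
  have comparable: "prefix (?\<theta> y) (?\<theta> z) \<or> prefix (?\<theta> z) (?\<theta> y)" if "?R y z" for y z
    using that buds invariant the_invariants_comparable by meson
  have "prefix (?\<theta> m) (?\<theta> s)" if "s \<in> \<eta>" for s
    using connected_cycle_paths_meet[OF assms(4) buds \<open>m \<in> \<eta>\<close> that] comparable
  proof (rule prefix_of_shortest_rtranclp)
    show "length (?\<theta> m) \<le> length (?\<theta> z)" if "?R y z" for y z
      using that shortest by blast
  qed
  with \<open>m \<in> \<eta>\<close> show ?thesis by blast
qed

end
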